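(* Let $X,Y\in\Sigma^*$ and positions $i\le j$ and $i'\le j'$ in $[0,|Y|]$. Let $\mathcal{A}$ be an alignment of $X$ onto $Y[i\,.\,.\,j)$ and $\mathcal{A}'$ an alignment of $X$ onto $Y[i'\,.\,.\,j')$. If $\mathcal{A}$ and $\mathcal{A}'$, viewed as paths in the alignment graph of $X$ and $Y$, do not contain any common diagonal edge, then $\mathrm{selfed}(X)\le|i-i'|+\mathrm{ed}_{\mathcal{A}}(X,Y[i\,.\,.\,j))+\mathrm{ed}_{\mathcal{A}'}(X,Y[i'\,.\,.\,j'))+|j-j'|$.
   Context: $Y[i\,.\,.\,j)$ is the fragment $Y[i]\cdots Y[j-1]$. An alignment of $X$ onto $Y[i\,.\,.\,j)$ is a path in the grid graph on $[0,|X|]\times[0,|Y|]$ from $(0,i)$ to $(|X|,j)$ using steps $(1,0)$, $(0,1)$, $(1,1)$; the steps $(x,y)\to(x+1,y+1)$ are diagonal edges. Its unweighted cost counts steps $(1,0)$, $(0,1)$, and diagonal steps $(x,y)\to(x+1,y+1)$ with $X[x]\ne Y[y]$. A self-alignment of $X$ is an alignment of $X$ onto $X$ with no edge $(x,x)\to(x+1,x+1)$; $\mathrm{selfed}(X)$ is the minimum unweighted cost of a self-alignment. *)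

theory Defs
  imports Main
begin

text \<open>Strings are lists. A path in the grid graph is the list of its vertices (x, y);
  its edges are the consecutive pairs.\<close>

definition edges :: "(nat \<times> nat) list \<Rightarrow> ((nat \<times> nat) \<times> (nat \<times> nat)) list" where
  "edges P = zip P (tl P)"

definition grid_step :: "nat \<times> nat \<Rightarrow> nat \<times> nat \<Rightarrow> bool" where
  "grid_step p q \<longleftrightarrow> q = (fst p + 1, snd p) \<or> q = (fst p, snd p + 1) \<or> q = (fst p + 1, snd p + 1)"

definition is_alignment :: "'a list \<Rightarrow> 'a list \<Rightarrow> nat \<Rightarrow> nat \<Rightarrow> (nat \<times> nat) list \<Rightarrow> bool" where
  "is_alignment X Y i j A \<longleftrightarrow>
     A \<noteq> [] \<and> hd A = (0, i) \<and> last A = (length X, j) \<and>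
     (\<forall>p \<in> set A. fst p \<le> length X \<and> snd p \<le> length Y) \<and>
     (\<forall>e \<in> set (edges A). grid_step (fst e) (snd e))"

definition is_diag :: "(nat \<times> nat) \<times> (nat \<times> nat) \<Rightarrow> bool" where
  "is_diag e \<longleftrightarrow> snd e = (fst (fst e) + 1, snd (fst e) + 1)"

definition diag_edges :: "(nat \<times> nat) list \<Rightarrow> ((nat \<times> nat) \<times> (nat \<times> nat)) set" where
  "diag_edges A = {e \<in> set (edges A). is_diag e}"

definition align_cost :: "'a list \<Rightarrow> 'a list \<Rightarrow> (nat \<times> nat) list \<Rightarrow> nat" where
  "align_cost X Y A =
     sum_list (map (\<lambda>e. if is_diag e \<and> X ! fst (fst e) = Y ! snd (fst e) then 0 else 1) (edges A))"

definition is_self_alignment :: "'a list \<Rightarrow> (nat \<times> nat) list \<Rightarrow> bool" where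
  "is_self_alignment X A \<longleftrightarrow> is_alignment X X 0 (length X) A \<and>
     (\<forall>x. ((x, x), (x + 1, x + 1)) \<notin> set (edges A))"

definition selfed :: "'a list \<Rightarrow> nat" where
  "selfed X = Min {align_cost X X A | A. is_self_alignment X A}"

end

theory Submission
  imports Defs
begin

text \<open>Walk along both alignments at once. If A is at (x, y) and A' at (x', y'), the pair
  (x, x') is a vertex of the alignment graph of X with itself, and these pairs trace a path B
  from (0, 0) to (|X|, |X|). A vertical step of either alignment leaves B in place. Otherwise an
  alignment whose step is horizontal, or which is behind in Y, advances alone and B makes a
  horizontal or vertical step. The only remaining case is that both alignments are about to
  take a diagonal step from the same row; then both advance and B steps diagonally from (x, x')
  with x \<noteq> x', because A and A' share no diagonal edge. So B is a self-alignment, and each of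
  its steps costs at most the steps of A and A' it comes from plus the decrease of |y - y'|;
  a mismatch X[x] \<noteq> X[x'] forces a mismatch of X[x] or X[x'] against Y[y]. Once one alignment
  has reached x = |X|, B ends with a straight run, whose length is at most the remaining cost of
  the other alignment plus |y - y'| + |j - j'|.\<close>

definition edge_cost :: "'a list \<Rightarrow> 'a list \<Rightarrow> (nat \<times> nat) \<times> (nat \<times> nat) \<Rightarrow> nat" where
  "edge_cost X Y e = (if is_diag e \<and> X ! fst (fst e) = Y ! snd (fst e) then 0 else 1)"

definition grid_path :: "(nat \<times> nat) list \<Rightarrow> nat \<times> nat \<Rightarrow> nat \<times> nat \<Rightarrow> bool" where
  "grid_path P p q \<longleftrightarrow>
     P \<noteq> [] \<and> hd P = p \<and> last P = q \<and> (\<forall>e \<in> set (edges P). grid_step (fst e) (snd e))"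

lemma edges_single [simp]: "edges [p] = []"
  by (simp add: edges_def)

lemma edges_Cons: "P \<noteq> [] \<Longrightarrow> edges (p # P) = (p, hd P) # edges P"
  by (cases P) (auto simp: edges_def)

lemma edges_map: "edges (map f P) = map (map_prod f f) (edges P)"
  by (simp add: edges_def map_tl[symmetric] zip_map_map map_prod_def)

lemma grid_path_single [simp]: "grid_path [p] p' q \<longleftrightarrow> p' = p \<and> q = p"
  by (auto simp: grid_path_def)

lemma grid_path_Cons:
  "P \<noteq> [] \<Longrightarrow> grid_path (p # P) p' q \<longleftrightarrow> p' = p \<and> grid_step p (hd P) \<and> grid_path P (hd P) q"
  by (auto simp: grid_path_def edges_Cons)

lemma grid_path_ConsI: "grid_step p p' \<Longrightarrow> grid_path P p' q \<Longrightarrow> grid_path (p # P) p q"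
  by (auto simp: grid_path_def edges_Cons)

lemma grid_path_induct [consumes 1, case_names single step]:
  assumes "grid_path P p q"
    and single: "R [q] q"
    and step: "\<And>p p' P. grid_step p p' \<Longrightarrow> grid_path P p' q \<Longrightarrow> R P p' \<Longrightarrow> R (p # P) p"
  shows "R P p"
  using assms(1)
proof (induction P arbitrary: p)
  case Nil
  then show ?case by (simp add: grid_path_def)
next
  case (Cons p0 P)
  show ?case
  proof (cases "P = []")
    case True
    with Cons.prems show ?thesis using single by simp
  next
    case False
    with Cons.prems have "p = p0" "grid_step p0 (hd P)" "grid_path P (hd P) q"
      by (simp_all add: grid_path_Cons)
    with Cons.IH show ?thesis using step by blast
  qed
qed

lemma grid_path_bounded: "grid_path P p q \<Longrightarrow> \<forall>r \<in> set P. fst r \<le> fst q \<and> snd r \<le> snd q"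
proof (induction rule: grid_path_induct)
  case (step p p' P)
  then have "p' \<in> set P"
    by (auto simp: grid_path_def)
  with step show ?case
    by (auto simp: grid_step_def)
qed simp

lemma align_cost_sum_edge_cost: "align_cost X Y A = sum_list (map (edge_cost X Y) (edges A))"
  by (simp add: align_cost_def edge_cost_def[abs_def])

lemma align_cost_single [simp]: "align_cost X Y [p] = 0"
  by (simp add: align_cost_def)

lemma align_cost_Cons:
  "P \<noteq> [] \<Longrightarrow> align_cost X Y (p # P) = edge_cost X Y (p, hd P) + align_cost X Y P"
  by (simp add: align_cost_sum_edge_cost edges_Cons)

lemma diag_edges_Cons:
  "P \<noteq> [] \<Longrightarrow> diag_edges (p # P) = {(p, hd P)} \<inter> Collect is_diag \<union> diag_edges P"
  by (auto simp: diag_edges_def edges_Cons)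

lemma length_difference_le_align_cost:
  "grid_path A p q \<Longrightarrow> int (fst q) - int (fst p) \<le> int (align_cost X Y A) + int (snd q) - int (snd p)"
proof (induction rule: grid_path_induct)
  case (step p p' P)
  then have "int (fst p') - int (fst p) \<le> int (edge_cost X Y (p, p')) + int (snd p') - int (snd p)"
    by (auto simp: grid_step_def edge_cost_def is_diag_def)
  with step show ?case
    by (simp add: align_cost_Cons grid_path_def)
qed simp

lemma align_cost_le_length_sum:
  "grid_path A p q \<Longrightarrow> align_cost X Y A + fst p + snd p \<le> fst q + snd q"
proof (induction rule: grid_path_induct)
  case (step p p' P)
  then have "edge_cost X Y (p, p') + fst p + snd p \<le> fst p' + snd p'"
    by (auto simp: grid_step_def edge_cost_def)
  with step show ?case
    by (simp add: align_cost_Cons grid_path_def)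
qed simp

lemma is_alignment_iff_grid_path:
  "is_alignment X Y i j A \<longleftrightarrow> grid_path A (0, i) (length X, j) \<and> j \<le> length Y"
proof
  assume "is_alignment X Y i j A"
  then show "grid_path A (0, i) (length X, j) \<and> j \<le> length Y"
    using last_in_set[of A] by (fastforce simp: is_alignment_def grid_path_def)
next
  assume A: "grid_path A (0, i) (length X, j) \<and> j \<le> length Y"
  then have "\<forall>p \<in> set A. fst p \<le> length X \<and> snd p \<le> length Y"
    using grid_path_bounded[of A "(0, i)" "(length X, j)"] by fastforce
  with A show "is_alignment X Y i j A"
    by (simp add: is_alignment_def grid_path_def)
qed

definition off_diagonal_reachable :: "'a list \<Rightarrow> int \<Rightarrow> nat \<times> nat \<Rightarrow> nat \<times> nat \<Rightarrow> bool" where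
  "off_diagonal_reachable X k p q \<longleftrightarrow>
     (\<exists>B. grid_path B p q \<and> (\<forall>x. ((x, x), (x + 1, x + 1)) \<notin> set (edges B)) \<and>
          int (align_cost X X B) \<le> k)"

lemma off_diagonal_reachable_refl: "off_diagonal_reachable X 0 p p"
  unfolding off_diagonal_reachable_def by (intro exI[of _ "[p]"]) simp

lemma off_diagonal_reachable_mono:
  "off_diagonal_reachable X k p q \<Longrightarrow> k \<le> k' \<Longrightarrow> off_diagonal_reachable X k' p q"
  unfolding off_diagonal_reachable_def by fastforce

lemma off_diagonal_reachable_Cons:
  assumes "off_diagonal_reachable X k p' q" "grid_step p p'" "p' = (fst p + 1, snd p + 1) \<Longrightarrow> fst p \<noteq> snd p"
  shows "off_diagonal_reachable X (int (edge_cost X X (p, p')) + k) p q"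
proof -
  obtain B where B: "grid_path B p' q" "\<forall>x. ((x, x), (x + 1, x + 1)) \<notin> set (edges B)"
    "int (align_cost X X B) \<le> k"
    using assms(1) by (auto simp: off_diagonal_reachable_def)
  then have "B \<noteq> []" "hd B = p'" by (auto simp: grid_path_def)
  with B assms(2,3) show ?thesis
    unfolding off_diagonal_reachable_def
    by (intro exI[of _ "p # B"]) (auto simp: grid_path_Cons edges_Cons align_cost_Cons)
qed

lemma off_diagonal_reachable_swap:
  assumes "off_diagonal_reachable X k (a, a') (m, m')"
  shows "off_diagonal_reachable X k (a', a) (m', m)"
proof -
  obtain B where B: "grid_path B (a, a') (m, m')" "\<forall>x. ((x, x), (x + 1, x + 1)) \<notin> set (edges B)"
    "int (align_cost X X B) \<le> k"
    using assms by (auto simp: off_diagonal_reachable_def)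
  have "grid_path (map prod.swap B) (a', a) (m', m)"
    using B(1) by (auto simp: grid_path_def edges_map hd_map last_map grid_step_def)
  moreover have "((x, x), (x + 1, x + 1)) \<notin> set (edges (map prod.swap B))" for x
    using B(2) by (auto simp: edges_map)
  moreover have "edge_cost X X (map_prod prod.swap prod.swap e) = edge_cost X X e" for e
    by (cases e) (auto simp: edge_cost_def is_diag_def)
  then have "align_cost X X (map prod.swap B) = align_cost X X B"
    by (simp add: align_cost_sum_edge_cost edges_map comp_def)
  ultimately show ?thesis
    using B(3) unfolding off_diagonal_reachable_def by metis
qed

lemma off_diagonal_reachable_horizontal:
  "a \<le> m \<Longrightarrow> off_diagonal_reachable X (int (m - a)) (a, b) (m, b)"
proof (induction a rule: inc_induct)
  case base
  show ?case using off_diagonal_reachable_refl by simp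
next
  case (step a)
  have "edge_cost X X ((a, b), (Suc a, b)) = 1"
    by (simp add: edge_cost_def is_diag_def)
  with off_diagonal_reachable_Cons[OF step.IH, of "(a, b)"] step.hyps show ?case
    by (simp add: grid_step_def of_nat_diff)
qed

lemma off_diagonal_reachable_vertical:
  "b \<le> m \<Longrightarrow> off_diagonal_reachable X (int (m - b)) (a, b) (a, m)"
  using off_diagonal_reachable_swap[OF off_diagonal_reachable_horizontal] by fastforce

lemma selfed_le_of_off_diagonal_reachable:
  assumes "off_diagonal_reachable X k (0, 0) (length X, length X)"
  shows "int (selfed X) \<le> k"
proof -
  let ?costs = "{align_cost X X A | A. is_self_alignment X A}"
  obtain B where B: "is_self_alignment X B" "int (align_cost X X B) \<le> k"
    using assms by (auto simp: off_diagonal_reachable_def is_self_alignment_def is_alignment_iff_grid_path)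
  have "?costs \<subseteq> {..2 * length X}"
  proof
    fix c
    assume "c \<in> ?costs"
    then obtain A where "grid_path A (0, 0) (length X, length X)" "c = align_cost X X A"
      by (auto simp: is_self_alignment_def is_alignment_iff_grid_path)
    then show "c \<in> {..2 * length X}"
      using align_cost_le_length_sum[of A "(0, 0)" "(length X, length X)" X X] by simp
  qed
  then have "selfed X \<le> align_cost X X B"
    unfolding selfed_def using B(1) finite_subset by (intro Min_le) auto
  with B(2) show ?thesis
    by linarith
qed

definition mergeable :: "'a list \<Rightarrow> 'a list \<Rightarrow> (nat \<times> nat) list \<Rightarrow> (nat \<times> nat) list \<Rightarrow> bool" where
  "mergeable X Y A A' \<longleftrightarrow> off_diagonal_reachable X
     (\<bar>int (snd (hd A)) - int (snd (hd A'))\<bar> + int (align_cost X Y A) + int (align_cost X Y A')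
       + \<bar>int (snd (last A)) - int (snd (last A'))\<bar>)
     (fst (hd A), fst (hd A')) (fst (last A), fst (last A'))"

lemma mergeable_swap: "mergeable X Y A A' \<Longrightarrow> mergeable X Y A' A"
  unfolding mergeable_def
  by (elim off_diagonal_reachable_swap[THEN off_diagonal_reachable_mono]) (simp add: abs_minus_commute)

lemma mergeable_single:
  assumes "grid_path A' p' q'"
  shows "mergeable X Y [r] A'"
proof -
  have ends: "hd A' = p'" "last A' = q'" "fst p' \<le> fst q'"
    using grid_path_bounded[OF assms] assms by (auto simp: grid_path_def)
  have "int (fst q') - int (fst p') \<le> int (align_cost X Y A') + int (snd q') - int (snd p')"
    using length_difference_le_align_cost[OF assms] .
  with off_diagonal_reachable_vertical[OF ends(3), of X "fst r"] show ?thesis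
    unfolding mergeable_def ends(1,2) by (simp, elim off_diagonal_reachable_mono) arith
qed

lemma mergeable_Cons:
  assumes merge: "mergeable X Y As A'"
    and paths: "grid_path As (c, z) q" "A' \<noteq> []" "hd A' = (a', y')"
    and step: "grid_step (a, y) (c, z)"
    and moves_alone: "c = a \<or> z = y \<or> y < y'"
  shows "mergeable X Y ((a, y) # As) A'"
proof -
  define k where "k = int (align_cost X Y As) + int (align_cost X Y A')
    + \<bar>int (snd (last As)) - int (snd (last A'))\<bar>"
  have reach: "off_diagonal_reachable X (\<bar>int z - int y'\<bar> + k) (c, a') (fst (last As), fst (last A'))"
    using merge paths unfolding mergeable_def k_def grid_path_def by (simp add: ac_simps)
  have "off_diagonal_reachable X (\<bar>int y - int y'\<bar> + int (edge_cost X Y ((a, y), (c, z))) + k)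
    (a, a') (fst (last As), fst (last A'))"
  proof (cases "c = a")
    case True
    then have "z = y + 1" "edge_cost X Y ((a, y), (c, z)) = 1"
      using step by (auto simp: grid_step_def edge_cost_def is_diag_def)
    then show ?thesis
      by (intro off_diagonal_reachable_mono[OF reach[unfolded True]]) auto
  next
    case False
    then have c: "c = a + 1"
      using step by (auto simp: grid_step_def)
    have "off_diagonal_reachable X (1 + (\<bar>int z - int y'\<bar> + k)) (a, a') (fst (last As), fst (last A'))"
      using off_diagonal_reachable_Cons[OF reach, of "(a, a')"] c
      by (simp add: grid_step_def edge_cost_def is_diag_def)
    moreover have "1 + \<bar>int z - int y'\<bar> \<le> \<bar>int y - int y'\<bar> + int (edge_cost X Y ((a, y), (c, z)))"
      using step moves_alone c by (auto simp: grid_step_def edge_cost_def is_diag_def)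
    ultimately show ?thesis
      by (elim off_diagonal_reachable_mono) simp
  qed
  with paths show ?thesis
    unfolding mergeable_def k_def grid_path_def by (simp add: align_cost_Cons ac_simps)
qed

lemma mergeable_Cons_Cons:
  assumes merge: "mergeable X Y As As'"
    and paths: "grid_path As (a + 1, y + 1) q" "grid_path As' (a' + 1, y + 1) q'"
    and "a \<noteq> a'"
  shows "mergeable X Y ((a, y) # As) ((a', y) # As')"
proof -
  define k where "k = int (align_cost X Y As) + int (align_cost X Y As') + \<bar>int (snd q) - int (snd q')\<bar>"
  have "off_diagonal_reachable X k (a + 1, a' + 1) (fst q, fst q')"
    using merge paths unfolding mergeable_def k_def grid_path_def by simp
  from off_diagonal_reachable_Cons[OF this, of "(a, a')"]
  have "off_diagonal_reachable X (int (edge_cost X X ((a, a'), (a + 1, a' + 1))) + k) (a, a') (fst q, fst q')"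
    using \<open>a \<noteq> a'\<close> by (simp add: grid_step_def)
  \<comment> \<open>if both Y-edges are matches, then X[a] = Y[y] = X[a']\<close>
  moreover have "edge_cost X X ((a, a'), (a + 1, a' + 1))
      \<le> edge_cost X Y ((a, y), (a + 1, y + 1)) + edge_cost X Y ((a', y), (a' + 1, y + 1))"
    by (simp add: edge_cost_def is_diag_def)
  ultimately show ?thesis
    using paths unfolding mergeable_def k_def grid_path_def
    by (simp add: align_cost_Cons, elim off_diagonal_reachable_mono) simp
qed

lemma mergeable_Cons_of_tails:
  assumes paths: "grid_path As (c, z) q" "grid_path As' (c', z') q'"
    and steps: "grid_step (a, y) (c, z)" "grid_step (a', y') (c', z')"
    and disjoint: "diag_edges ((a, y) # As) \<inter> diag_edges ((a', y') # As') = {}"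
    and tail_first: "diag_edges As \<inter> diag_edges ((a', y') # As') = {} \<Longrightarrow>
      mergeable X Y As ((a', y') # As')"
    and tail_second: "diag_edges ((a, y) # As) \<inter> diag_edges As' = {} \<Longrightarrow>
      mergeable X Y ((a, y) # As) As'"
    and tail_both: "diag_edges As \<inter> diag_edges As' = {} \<Longrightarrow> mergeable X Y As As'"
  shows "mergeable X Y ((a, y) # As) ((a', y') # As')"
proof -
  have "As \<noteq> []" "hd As = (c, z)" "As' \<noteq> []" "hd As' = (c', z')"
    using paths by (auto simp: grid_path_def)
  then have diag: "diag_edges ((a, y) # As) = {((a, y), (c, z))} \<inter> Collect is_diag \<union> diag_edges As"
      "diag_edges ((a', y') # As') = {((a', y'), (c', z'))} \<inter> Collect is_diag \<union> diag_edges As'"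
    by (simp_all add: diag_edges_Cons)
  consider (first) "c = a \<or> z = y \<or> y < y'" | (second) "c' = a' \<or> z' = y' \<or> y' < y"
    | (both) "c = a + 1" "c' = a' + 1" "z = y + 1" "z' = y + 1" "y' = y"
    using steps unfolding grid_step_def by fastforce
  then show ?thesis
  proof cases
    case first
    have "diag_edges As \<inter> diag_edges ((a', y') # As') = {}"
      using disjoint diag by blast
    note tail = tail_first[OF this]
    show ?thesis
      using mergeable_Cons[OF tail paths(1) _ _ steps(1) first] by simp
  next
    case second
    have "diag_edges ((a, y) # As) \<inter> diag_edges As' = {}"
      using disjoint diag by blast
    note tail = mergeable_swap[OF tail_second[OF this]]
    show ?thesis
      using mergeable_Cons[OF tail paths(2) _ _ steps(2) second]
      by (simp add: mergeable_swap)
  next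
    case both
    have "((a, y), (a + 1, y + 1)) \<in> diag_edges ((a, y) # As)"
      "((a', y), (a' + 1, y + 1)) \<in> diag_edges ((a', y') # As')"
      using diag both by (auto simp: is_diag_def)
    with disjoint have "a \<noteq> a'"
      by auto
    have "diag_edges As \<inter> diag_edges As' = {}"
      using disjoint diag by blast
    from tail_both[OF this] paths \<open>a \<noteq> a'\<close> show ?thesis
      unfolding both by (rule mergeable_Cons_Cons)
  qed
qed

lemma mergeable_of_disjoint_diag_edges:
  assumes "grid_path A p q" "grid_path A' p' q'" "diag_edges A \<inter> diag_edges A' = {}"
  shows "mergeable X Y A A'"
  using assms
proof (induction arbitrary: A' p' rule: grid_path_induct)
  case single
  then show ?case
    using mergeable_single by blast
next
  case (step p p1 As)
  note outer_IH = step.IH and outer_step = step.hyps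
  from step.prems show ?case
  proof (induction rule: grid_path_induct)
    case single
    show ?case
      using mergeable_swap[OF mergeable_single[OF grid_path_ConsI[OF outer_step]]] .
  next
    case (step p' p1' As')
    obtain a y c z a' y' c' z' where pts: "p = (a, y)" "p1 = (c, z)" "p' = (a', y')" "p1' = (c', z')"
      by (metis surj_pair)
    from outer_step(2) step.hyps(2) outer_step(1) step.hyps(1) step.prems
      outer_IH[OF grid_path_ConsI[OF step.hyps(1,2)]] step.IH outer_IH[OF step.hyps(2)]
    show ?case
      unfolding pts by (rule mergeable_Cons_of_tails)
  qed
qed

theorem lemma4p4:
  fixes X Y :: "'a list" and i j i' j' :: nat and A A' :: "(nat \<times> nat) list"
  assumes "i \<le> j" "j \<le> length Y" "i' \<le> j'" "j' \<le> length Y"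
    and "is_alignment X Y i j A" and "is_alignment X Y i' j' A'"
    and "diag_edges A \<inter> diag_edges A' = {}"
  shows "int (selfed X) \<le> \<bar>int i - int i'\<bar> + int (align_cost X Y A) + int (align_cost X Y A')
           + \<bar>int j - int j'\<bar>"
proof -
  have "grid_path A (0, i) (length X, j)" "grid_path A' (0, i') (length X, j')"
    using assms(5,6) by (simp_all add: is_alignment_iff_grid_path)
  with assms(7) have "mergeable X Y A A'"
    using mergeable_of_disjoint_diag_edges by blast
  with \<open>grid_path A (0, i) (length X, j)\<close> \<open>grid_path A' (0, i') (length X, j')\<close> show ?thesis
    unfolding mergeable_def grid_path_def by (intro selfed_le_of_off_diagonal_reachable) simp
qed

end
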